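(* Let $\ell\in\{1,2\}$ and let $g\in O^+(\Lambda)$ satisfy $g(\mathbf e_\ell)=\mathbf e_\ell$. Then $\Phi_\ell(g\cdot u)^2=\Phi_\ell(u)^2$ for all $u\in\mathbb M_\ell\otimes\mathbb R+i\,\mathcal C^+_{\mathbb M_\ell}$.
   Context: $\Lambda=\mathbb U(2)\oplus\mathbb U\oplus\mathbb E_8(2)$ ($\mathbb U$ the hyperbolic plane, $\mathbb E_8$ negative definite, $(2)$ scaling by 2); $\{\mathbf e_1,\mathbf f_1\}$ is the standard basis of the factor $\mathbb U$ and $\{\mathbf e_2,\mathbf f_2\}$ of the factor $\mathbb U(2)$. $\Omega_\Lambda^+$ is a component of $\{[\omega]:\omega^2=0,\langle\omega,\bar\omega\rangle>0\}\subset\mathbf P(\Lambda\otimes\mathbb C)$ and $O^+(\Lambda)$ the subgroup of $O(\Lambda)$ preserving it. $\mathbb M_\ell=\mathbb U(2/\ell)\oplus\mathbb E_8(2)$, so $\Lambda=(\mathbb Z\mathbf e_\ell+\mathbb Z\mathbf f_\ell)\oplus\mathbb M_\ell$; $\mathcal C^+_{\mathbb M_\ell}$ is the component of the positive cone of $\mathbb M_\ell$ such that $j_\ell(u)=[-(u^2/2)\mathbf e_\ell+\mathbf f_\ell/\ell+(-1)^{2/\ell}u]$ is an isomorphism $\mathbb M_\ell\otimes\mathbb R+i\mathcal C^+_{\mathbb M_\ell}\to\Omega_\Lambda^+$ (bases chosen with $\mathbf e_\ell,\mathbf f_\ell$ in the closure of $\mathcal C^+_{\mathbb M_{2/\ell}}$).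 $O^+(\Lambda)$ acts by $g\cdot u=j_\ell^{-1}(g(j_\ell(u)))$. With $c(n)$ defined by $\eta(\tau)^{-8}\eta(2\tau)^8\eta(4\tau)^{-8}=\sum_{n\ge-1}c(n)e^{2\pi in\tau}$, $\Phi_1(z)=\prod_{\lambda\in\mathbb M_1\cap\overline{\mathcal C}^+_{\mathbb M_1}\setminus\{0\}}\bigl(\frac{1-e^{\pi i\langle\lambda,z\rangle}}{1+e^{\pi i\langle\lambda,z\rangle}}\bigr)^{c(\lambda^2/2)}$ and $\Phi_2(w)=2^8e^{2\pi i\langle\mathbf e_1,w\rangle}\prod_{\lambda\in\mathbb Z_{>0}\mathbf e_1\cup\Pi^+}(1-e^{2\pi i\langle\lambda,w\rangle})^{(-1)^{\langle\lambda,\mathbf e_1-\mathbf f_1\rangle}c(\lambda^2/2)}$, $\Pi^+=\{\lambda\in\mathbb M_2:\langle\lambda,\mathbf e_1\rangle>0,\lambda^2\ge-2\}$, extended holomorphically to the tube domains. These satisfy $\Phi_\ell(g\cdot u)=\chi(g)J_\ell(g,u)^4\Phi_\ell(u)$ for $g\in O^+(\Lambda)$, with a character $\chi$ of order dividing 2 and $J_\ell(g,u)=\langle g(-(u^2/2)\mathbf e_\ell+\mathbf f_\ell/\ell+(-1)^{2/\ell}u),\mathbf e_\ell\rangle$. *)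

theory Defs
  imports Complex_Main "Jordan_Normal_Form.Matrix"
begin

text \<open>The lattice Lambda = U(2) + U + E8(2) of rank 12, realised as Z^12 with Gram matrix
  Gram.  Coordinates: 0,1 = e_2,f_2 (factor U(2)); 2,3 = e_1,f_1 (factor U);
  4..11 = simple roots of E8 (Bourbaki labels 1..8 shifted by 3), form scaled by -2
  (E8 negative definite, then scaled by 2).\<close>

definition E8_edge :: "nat \<Rightarrow> nat \<Rightarrow> bool" where
  "E8_edge i j \<longleftrightarrow> {i, j} \<in> {{4,6},{6,7},{7,8},{8,9},{9,10},{10,11},{5,7}}"

definition gram_entry :: "nat \<Rightarrow> nat \<Rightarrow> int" where
  "gram_entry i j =
    (if {i, j} = {0, 1} then 2
     else if {i, j} = {2, 3} then 1
     else if 4 \<le> i \<and> i < 12 \<and> i = j then -4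
     else if E8_edge i j then 2
     else 0)"

definition Gram :: "int mat" where
  "Gram = mat 12 12 (\<lambda>(i, j). gram_entry i j)"

definition bil :: "complex vec \<Rightarrow> complex vec \<Rightarrow> complex" where
  "bil x y = x \<bullet> (map_mat of_int Gram *\<^sub>v y)"

definition bilR :: "real vec \<Rightarrow> real vec \<Rightarrow> real" where
  "bilR x y = x \<bullet> (map_mat of_int Gram *\<^sub>v y)"

definition e_vec :: "nat \<Rightarrow> complex vec" where
  "e_vec l = (if l = 1 then unit_vec 12 2 else unit_vec 12 0)"

definition f_vec :: "nat \<Rightarrow> complex vec" where
  "f_vec l = (if l = 1 then unit_vec 12 3 else unit_vec 12 1)"

text \<open>Coordinates of M_l = U(2/l) + E8(2), i.e. the complement of e_l, f_l.\<close>
definition M_coords :: "nat \<Rightarrow> nat set" where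
  "M_coords l = (if l = 1 then {0,1} \<union> {4..<12} else {2,3} \<union> {4..<12})"

definition eR_plus_fR :: "nat \<Rightarrow> real vec" where
  "eR_plus_fR l = (if l = 1 then unit_vec 12 2 + unit_vec 12 3 else unit_vec 12 0 + unit_vec 12 1)"

text \<open>Positive cone component C^+_{M_l}: the component of the positive cone of
  M_l (x) R containing e_{2/l} + f_{2/l} (so that e_{2/l}, f_{2/l} lie in its closure).\<close>
definition pos_cone :: "nat \<Rightarrow> real vec set" where
  "pos_cone l = {y \<in> carrier_vec 12. (\<forall>i<12. i \<notin> M_coords l \<longrightarrow> y $ i = 0) \<and>
       bilR y y > 0 \<and> bilR y (eR_plus_fR (2 div l)) > 0}"

definition tube :: "nat \<Rightarrow> complex vec set" where
  "tube l = {u \<in> carrier_vec 12. (\<forall>i<12. i \<notin> M_coords l \<longrightarrow> u $ i = 0) \<and>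
       map_vec Im u \<in> pos_cone l}"

definition j_map :: "nat \<Rightarrow> complex vec \<Rightarrow> complex vec" where
  "j_map l u = (- (bil u u / 2)) \<cdot>\<^sub>v e_vec l + (1 / of_nat l) \<cdot>\<^sub>v f_vec l
               + ((-1) ^ (2 div l)) \<cdot>\<^sub>v u"

text \<open>Proportionality of nonzero vectors: equality of points of P(Lambda (x) C).\<close>
definition proj_eq :: "complex vec \<Rightarrow> complex vec \<Rightarrow> bool" where
  "proj_eq v w \<longleftrightarrow> (\<exists>c. c \<noteq> 0 \<and> v = c \<cdot>\<^sub>v w)"

text \<open>The cone over Omega^+_Lambda: the component of the period domain that is the
  image of j_1 (as fixed by the paper).\<close>
definition Omega_plus :: "complex vec set" where
  "Omega_plus = {\<omega>. \<exists>c u. c \<noteq> 0 \<and> u \<in> tube 1 \<and> \<omega> = c \<cdot>\<^sub>v j_map 1 u}"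

definition O_Lambda :: "int mat set" where
  "O_Lambda = {g \<in> carrier_mat 12 12. transpose_mat g * Gram * g = Gram}"

definition O_plus :: "int mat set" where
  "O_plus = {g \<in> O_Lambda. \<forall>\<omega>\<in>Omega_plus. map_mat of_int g *\<^sub>v \<omega> \<in> Omega_plus}"

text \<open>The action g . u = j_l^{-1}(g(j_l(u))).\<close>
definition act :: "nat \<Rightarrow> int mat \<Rightarrow> complex vec \<Rightarrow> complex vec" where
  "act l g u = (THE u'. u' \<in> tube l \<and> proj_eq (map_mat of_int g *\<^sub>v j_map l u) (j_map l u'))"

definition J_factor :: "nat \<Rightarrow> int mat \<Rightarrow> complex vec \<Rightarrow> complex" where
  "J_factor l g u = bil (map_mat of_int g *\<^sub>v j_map l u) (e_vec l)"

end

theory Submission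
  imports Defs
begin

text \<open>Since g fixes e_l and preserves the form, the automorphy factor is
  J_l(g, u) = <g j_l(u), g e_l> = <j_l(u), e_l>.  The vector u lies in M_l, which is
  orthogonal to e_l and f_l, and <e_l, e_l> = 0, so only the f_l / l component of j_l(u)
  contributes, giving <f_l, e_l> / l = 1.  Hence Phi_l(g . u) = chi(g) Phi_l(u), and
  squaring removes the character of order dividing 2.\<close>

lemma mult_mat_vec_unit_vec:
  fixes A :: "'a :: semiring_1 mat"
  assumes "A \<in> carrier_mat m n" and "k < n"
  shows "A *\<^sub>v unit_vec n k = col A k"
  using assms by (intro eq_vecI) (auto simp: row_def col_def)

lemma scalar_prod_mult_mat_vec_orthogonal:
  fixes G A :: "'a :: comm_ring_1 mat"
  assumes G: "G \<in> carrier_mat n n" and A: "A \<in> carrier_mat n n"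
    and orth: "transpose_mat G * A * G = A"
    and x: "x \<in> carrier_vec n" and y: "y \<in> carrier_vec n"
  shows "(G *\<^sub>v x) \<bullet> (A *\<^sub>v (G *\<^sub>v y)) = x \<bullet> (A *\<^sub>v y)"
proof -
  have "(G *\<^sub>v x) \<bullet> (A *\<^sub>v (G *\<^sub>v y))
        = (transpose_mat (transpose_mat G) *\<^sub>v x) \<bullet> (A *\<^sub>v (G *\<^sub>v y))"
    by simp
  also have "\<dots> = x \<bullet> (transpose_mat G *\<^sub>v (A *\<^sub>v (G *\<^sub>v y)))"
    using G A x y by (intro transpose_vec_mult_scalar[of _ n n]) auto
  also have "transpose_mat G *\<^sub>v (A *\<^sub>v (G *\<^sub>v y)) = (transpose_mat G * A * G) *\<^sub>v y"
    using G A y by (simp add: assoc_mult_mat_vec[of _ n n _ n])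
  finally show ?thesis
    using orth by simp
qed

lemma Gram_carrier: "Gram \<in> carrier_mat 12 12"
  by (simp add: Gram_def)

lemma bil_O_Lambda_invariant:
  assumes g: "g \<in> O_Lambda" and x: "x \<in> carrier_vec 12" and y: "y \<in> carrier_vec 12"
  shows "bil (map_mat of_int g *\<^sub>v x) (map_mat of_int g *\<^sub>v y) = bil x y"
proof -
  have gc: "g \<in> carrier_mat 12 12" and orth: "transpose_mat g * Gram * g = Gram"
    using g by (auto simp: O_Lambda_def)
  have "map_mat (of_int :: int \<Rightarrow> complex) (transpose_mat g * Gram * g)
        = transpose_mat (map_mat of_int g) * map_mat of_int Gram * map_mat of_int g"
    using gc Gram_carrier by (simp add: of_int_hom.mat_hom_mult[of _ 12 12 _ 12] map_mat_transpose)
  with orth gc Gram_carrier x y show ?thesis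
    unfolding bil_def by (intro scalar_prod_mult_mat_vec_orthogonal[of _ 12]) auto
qed

lemma Gram_mult_e_vec:
  assumes "l \<in> {1, 2}"
  shows "map_mat of_int Gram *\<^sub>v e_vec l = of_nat l \<cdot>\<^sub>v f_vec l"
  using assms
  by (intro eq_vecI)
     (auto simp: e_vec_def f_vec_def mult_mat_vec_unit_vec Gram_def
                 gram_entry_def E8_edge_def doubleton_eq_iff)

lemma tube_scalar_prod_f_vec:
  assumes "u \<in> tube l"
  shows "u \<bullet> f_vec l = 0"
  using assms by (auto simp: tube_def f_vec_def M_coords_def)

lemma j_map_scalar_prod_f_vec:
  assumes u: "u \<in> tube l"
  shows "j_map l u \<bullet> f_vec l = 1 / of_nat l"
proof -
  have uc: "u \<in> carrier_vec 12"
    using u by (simp add: tube_def)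
  have ec: "e_vec l \<in> carrier_vec 12" and fc: "f_vec l \<in> carrier_vec 12"
    by (simp_all add: e_vec_def f_vec_def)
  have "e_vec l \<bullet> f_vec l = 0" and "f_vec l \<bullet> f_vec l = 1"
    by (simp_all add: e_vec_def f_vec_def)
  with tube_scalar_prod_f_vec[OF u] show ?thesis
    using uc ec fc by (simp add: j_map_def add_scalar_prod_distrib[of _ 12])
qed

lemma bil_j_map_e_vec:
  assumes "l \<in> {1, 2}" and "u \<in> tube l"
  shows "bil (j_map l u) (e_vec l) = 1"
proof -
  have "j_map l u \<in> carrier_vec 12"
    using assms by (simp add: tube_def j_map_def e_vec_def f_vec_def)
  then have "bil (j_map l u) (e_vec l) = of_nat l * (j_map l u \<bullet> f_vec l)"
    using assms(1) by (simp add: bil_def Gram_mult_e_vec f_vec_def)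
  with assms show ?thesis
    by (auto simp: j_map_scalar_prod_f_vec)
qed

lemma J_factor_eq_1_if_fixes_e_vec:
  assumes l: "l \<in> {1, 2}" and g: "g \<in> O_Lambda"
    and fix_e: "map_mat of_int g *\<^sub>v e_vec l = e_vec l"
    and u: "u \<in> tube l"
  shows "J_factor l g u = 1"
proof -
  have "j_map l u \<in> carrier_vec 12"
    using u by (simp add: tube_def j_map_def e_vec_def f_vec_def)
  then have "J_factor l g u = bil (j_map l u) (e_vec l)"
    using bil_O_Lambda_invariant[OF g, of "j_map l u" "e_vec l"] fix_e
    by (simp add: J_factor_def e_vec_def)
  with bil_j_map_e_vec[OF l u] show ?thesis
    by simp
qed

theorem lemma2p3:
  fixes l :: nat and g :: "int mat" and Phi :: "complex vec \<Rightarrow> complex"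
    and chi :: "int mat \<Rightarrow> complex" and u :: "complex vec"
  assumes l: "l \<in> {1, 2}"
    and chi_hom: "\<forall>h\<in>O_plus. \<forall>h'\<in>O_plus. chi (h * h') = chi h * chi h'"
    and chi_ord: "\<forall>h\<in>O_plus. chi h ^ 2 = 1"
    and Phi_law: "\<forall>h\<in>O_plus. \<forall>v\<in>tube l.
                    Phi (act l h v) = chi h * J_factor l h v ^ 4 * Phi v"
    and g: "g \<in> O_plus"
    and fix_e: "map_mat of_int g *\<^sub>v e_vec l = e_vec l"
    and u: "u \<in> tube l"
  shows "Phi (act l g u) ^ 2 = Phi u ^ 2"
proof -
  have "J_factor l g u = 1"
    using g by (intro J_factor_eq_1_if_fixes_e_vec[OF l _ fix_e u]) (simp add: O_plus_def)
  with Phi_law g u have "Phi (act l g u) = chi g * Phi u"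
    by simp
  then have "Phi (act l g u) ^ 2 = chi g ^ 2 * Phi u ^ 2"
    by (simp add: power_mult_distrib)
  with chi_ord g show ?thesis
    by simp
qed

end
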